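(* Let $n\ge1$, let $j_1,\dots,j_n\ge 1$ be integers, let $h_k\in D_{j_k}$ and let $i_k\ge 0$ be integers for $k=1,\dots,n$. Then: (i) if $\sum_{k=1}^n i_k/j_k>1$, then $h_1^{i_1}\cdots h_n^{i_n}=0$ in ${}^\bullet\mathbb{R}$; (ii) if $p\ge1$ is an integer with $\frac1p\le \sum_{k=1}^n i_k/j_k\le 1$, then $h_1^{i_1}\cdots h_n^{i_n}\in D_p$.
   Context: A function $x:\mathbb{R}\to\mathbb{R}$ is called nilpotent if there exists $k\in\mathbb{N}$ such that $|x(t)-x(0)|^k=o(t)$ as $t\to 0$; $\mathrm{Nil}$ denotes the set of all nilpotent functions. For $x,y\in\mathrm{Nil}$ write $x\sim y$ iff $x(t)=y(t)+o(t)$ as $t\to0$. ${}^\bullet\mathbb{R}:=\mathrm{Nil}/\sim$ is the commutative ring with operations induced by pointwise sum and product. $D:=\{h\in{}^\bullet\mathbb{R} : \limsup_{t\to0}|h(t)/t|<+\infty\}$, and for integers $k\ge1$, $D_k:=\{h\in{}^\bullet\mathbb{R} : h^k\in D\}$. *)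

theory Defs
  imports "HOL-Analysis.Analysis" "HOL-Library.Landau_Symbols"
begin

definition nilpotent_fun :: "(real \<Rightarrow> real) \<Rightarrow> bool" where
  "nilpotent_fun x \<longleftrightarrow> (\<exists>k::nat. (\<lambda>t. \<bar>x t - x 0\<bar> ^ k) \<in> o[at 0](\<lambda>t. t))"

definition Nil_set :: "(real \<Rightarrow> real) set" where
  "Nil_set = {x. nilpotent_fun x}"

definition fequiv :: "(real \<Rightarrow> real) \<Rightarrow> (real \<Rightarrow> real) \<Rightarrow> bool" where
  "fequiv x y \<longleftrightarrow> x \<in> Nil_set \<and> y \<in> Nil_set \<and> (\<lambda>t. x t - y t) \<in> o[at 0](\<lambda>t. t)"

text \<open>Membership of the class of a representative h in D:
  limsup_{t\<rightarrow>0} |h(t)/t| < +\<infinity>.  (Well defined on classes.)\<close>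
definition in_D :: "(real \<Rightarrow> real) \<Rightarrow> bool" where
  "in_D h \<longleftrightarrow> h \<in> Nil_set \<and> Limsup (at 0) (\<lambda>t. ereal \<bar>h t / t\<bar>) < \<infinity>"

definition in_Dk :: "nat \<Rightarrow> (real \<Rightarrow> real) \<Rightarrow> bool" where
  "in_Dk k h \<longleftrightarrow> h \<in> Nil_set \<and> in_D (\<lambda>t. h t ^ k)"

end

theory Submission
  imports Defs
begin

text \<open>Membership in \<open>D\<close> says exactly \<open>h = O(t)\<close> as \<open>t \<rightarrow> 0\<close>. Let \<open>L = j_1 \<cdots> j_n\<close>,
  \<open>s = \<Sum> i_k / j_k\<close> and \<open>P = h_1^i_1 \<cdots> h_n^i_n\<close>. Since \<open>(h_k^i_k)^L = (h_k^j_k)^(i_k L / j_k)\<close>,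
  we get \<open>P^L = O(t^N)\<close> with \<open>N = L s\<close>. If \<open>s > 1\<close> then \<open>N > L\<close>, so \<open>P^L = o(t^L)\<close>; if
  \<open>p s \<ge> 1\<close> then \<open>(P^p)^L = O(t^(p N)) \<subseteq> O(t^L)\<close>. Taking \<open>L\<close>-th roots gives \<open>P = o(t)\<close>,
  resp. \<open>P^p = O(t)\<close>. Landau symbols at \<open>0\<close> ignore the value at \<open>0\<close>, which does enter
  nilpotency; \<open>h_k(0) = 0\<close>, hence \<open>P(0) = 0\<close>, holds because nilpotent functions are
  continuous at \<open>0\<close>.\<close>

lemma bigo_power_cancel:
  fixes f g :: "'a \<Rightarrow> real"
  assumes "(\<lambda>x. f x ^ n) \<in> O[F](\<lambda>x. g x ^ n)" "n > 0"
  shows "f \<in> O[F](g)"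
proof -
  have "\<bar>y ^ n\<bar> powr (1 / real n) = \<bar>y\<bar>" for y :: real
    using \<open>n > 0\<close> by (simp add: power_abs powr_powr flip: powr_realpow')
  then show ?thesis
    using bigo_powr[OF assms(1), of "1 / real n"] by simp
qed

lemma smallo_power_cancel:
  fixes f g :: "'a \<Rightarrow> real"
  assumes "(\<lambda>x. f x ^ n) \<in> o[F](\<lambda>x. g x ^ n)" "n > 0"
  shows "f \<in> o[F](g)"
proof -
  have "\<bar>y ^ n\<bar> powr (1 / real n) = \<bar>y\<bar>" for y :: real
    using \<open>n > 0\<close> by (simp add: power_abs powr_powr flip: powr_realpow')
  then show ?thesis
    using smallo_powr[OF assms(1), of "1 / real n"] \<open>n > 0\<close> by simp
qed

lemma smallo_1_iff_tendsto_0: "f \<in> o[F](\<lambda>_. 1) \<longleftrightarrow> (f \<longlongrightarrow> (0::real)) F"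
  using smalloD_tendsto[of f F "\<lambda>_. 1"] smalloI_tendsto[of f "\<lambda>_. 1"] by auto

lemma Limsup_abs_divide_finite_iff_bigo:
  fixes f g :: "'a \<Rightarrow> real"
  assumes "eventually (\<lambda>x. g x \<noteq> 0) F"
  shows "Limsup F (\<lambda>x. ereal \<bar>f x / g x\<bar>) < \<infinity> \<longleftrightarrow> f \<in> O[F](g)"
proof
  assume "Limsup F (\<lambda>x. ereal \<bar>f x / g x\<bar>) < \<infinity>"
  then obtain c where "Limsup F (\<lambda>x. ereal \<bar>f x / g x\<bar>) < ereal c"
    by (cases "Limsup F (\<lambda>x. ereal \<bar>f x / g x\<bar>)") (auto, meson gt_ex)
  then have "eventually (\<lambda>x. ereal \<bar>f x / g x\<bar> < ereal c) F"
    by (rule Limsup_lessD)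
  with assms have "eventually (\<lambda>x. norm (f x) \<le> c * norm (g x)) F"
    by eventually_elim (simp add: divide_less_eq)
  then show "f \<in> O[F](g)"
    by (rule bigoI)
next
  assume "f \<in> O[F](g)"
  then obtain c where "eventually (\<lambda>x. norm (f x) \<le> c * norm (g x)) F"
    by (elim landau_o.bigE)
  with assms have "eventually (\<lambda>x. ereal \<bar>f x / g x\<bar> \<le> ereal c) F"
    by eventually_elim (simp add: divide_le_eq)
  then have "Limsup F (\<lambda>x. ereal \<bar>f x / g x\<bar>) \<le> ereal c"
    by (rule Limsup_bounded)
  then show "Limsup F (\<lambda>x. ereal \<bar>f x / g x\<bar>) < \<infinity>"
    by (rule order.strict_trans1) simp
qed

lemma prod_power_bigo:
  fixes h :: "'b \<Rightarrow> 'a \<Rightarrow> real"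
  assumes "\<And>k. k \<in> A \<Longrightarrow> j k dvd L"
    and "\<And>k. k \<in> A \<Longrightarrow> (\<lambda>x. h k x ^ j k) \<in> O[F](g)"
  shows "(\<lambda>x. (\<Prod>k\<in>A. h k x ^ i k) ^ L) \<in> O[F](\<lambda>x. g x ^ (\<Sum>k\<in>A. i k * (L div j k)))"
proof -
  have "(\<lambda>x. \<Prod>k\<in>A. (h k x ^ j k) ^ (i k * (L div j k)))
          \<in> O[F](\<lambda>x. \<Prod>k\<in>A. g x ^ (i k * (L div j k)))"
    by (intro landau_o.big_prod landau_o.big_power assms)
  moreover have "(h k x ^ j k) ^ (i k * (L div j k)) = (h k x ^ i k) ^ L" if "k \<in> A" for k x
  proof -
    have "j k * (i k * (L div j k)) = i k * L"
      using assms(1)[OF that] by simp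
    then show ?thesis
      by (metis power_mult mult.commute)
  qed
  ultimately show ?thesis
    by (simp add: prod_power_distrib power_sum cong: prod.cong)
qed

lemma real_sum_mult_div:
  assumes "\<And>k. k \<in> A \<Longrightarrow> j k dvd L"
  shows "real (\<Sum>k\<in>A. i k * (L div j k)) = real L * (\<Sum>k\<in>A. real (i k) / real (j k))"
  using assms by (simp add: sum_distrib_left real_of_nat_div mult.commute cong: sum.cong)

lemma ident_smallo_1_at_0: "(\<lambda>t::real. t) \<in> o[at 0](\<lambda>_. 1)"
  by (rule smalloI_tendsto) (auto intro!: tendsto_eq_intros)

lemma power_smallo_power_at_0:
  assumes "m < n"
  shows "(\<lambda>t::real. t ^ n) \<in> o[at 0](\<lambda>t. t ^ m)"
proof -
  have "(\<lambda>t::real. t ^ (n - m)) \<in> o[at 0](\<lambda>t. 1 ^ (n - m))"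
    using assms by (intro landau_o.small_power ident_smallo_1_at_0) auto
  then have "(\<lambda>t::real. t ^ (n - m) * t ^ m) \<in> o[at 0](\<lambda>t. 1 * t ^ m)"
    by (intro landau_o.small_big_mult) auto
  then show ?thesis
    using assms by (simp flip: power_add)
qed

lemma power_bigo_power_at_0:
  assumes "m \<le> n"
  shows "(\<lambda>t::real. t ^ n) \<in> O[at 0](\<lambda>t. t ^ m)"
  using assms power_smallo_power_at_0[of m n]
  by (cases "m = n") (auto intro: landau_o.small_imp_big)

lemma tendsto_0_if_power_bigo_ident_at_0:
  fixes f :: "real \<Rightarrow> real"
  assumes "(\<lambda>t. f t ^ k) \<in> O[at 0](\<lambda>t. t)"
  shows "(f \<longlongrightarrow> 0) (at 0)"
proof -
  have small: "(\<lambda>t. f t ^ k) \<in> o[at 0](\<lambda>_. 1 ^ k)"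
    using landau_o.big_small_trans[OF assms ident_smallo_1_at_0] by simp
  have "k > 0"
  proof (rule ccontr)
    assume "\<not> k > 0"
    with small have "eventually (\<lambda>t::real. (1::real) = 0) (at 0)"
      by (simp add: landau_o.small_refl_iff)
    then show False
      by simp
  qed
  with small have "f \<in> o[at 0](\<lambda>_. 1)"
    by (intro smallo_power_cancel[of f k]) simp_all
  then show ?thesis
    by (simp add: smallo_1_iff_tendsto_0)
qed

lemma nilpotent_fun_tendsto_at_0:
  assumes "nilpotent_fun f"
  shows "(f \<longlongrightarrow> f 0) (at 0)"
proof -
  obtain k where "(\<lambda>t. \<bar>f t - f 0\<bar> ^ k) \<in> o[at 0](\<lambda>t. t)"
    using assms unfolding nilpotent_fun_def by blast
  then have "((\<lambda>t. \<bar>f t - f 0\<bar>) \<longlongrightarrow> 0) (at 0)"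
    by (intro tendsto_0_if_power_bigo_ident_at_0 landau_o.small_imp_big)
  then show ?thesis
    by (simp add: tendsto_rabs_zero_iff LIM_zero_iff)
qed

lemma nilpotent_fun_if_power_bigo_ident:
  fixes f :: "real \<Rightarrow> real"
  assumes "f 0 = 0" "(\<lambda>t. f t ^ k) \<in> O[at 0](\<lambda>t. t)"
  shows "nilpotent_fun f"
proof -
  have "(\<lambda>t. f t ^ k * f t ^ k) \<in> o[at 0](\<lambda>t. t * 1)"
    using landau_o.big_small_mult[OF assms(2) landau_o.big_small_trans[OF assms(2) ident_smallo_1_at_0]] .
  then have "(\<lambda>t. \<bar>f t - f 0\<bar> ^ (2 * k)) \<in> o[at 0](\<lambda>t. t)"
    using assms(1) by (simp add: mult_2 power_add flip: power_abs abs_mult)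
  then show ?thesis
    unfolding nilpotent_fun_def by blast
qed

lemma in_Dk_iff_bigo:
  "in_Dk j h \<longleftrightarrow>
     nilpotent_fun h \<and> nilpotent_fun (\<lambda>t. h t ^ j) \<and> (\<lambda>t. h t ^ j) \<in> O[at 0](\<lambda>t. t)"
  unfolding in_Dk_def in_D_def Nil_set_def
  using Limsup_abs_divide_finite_iff_bigo[OF eventually_neq_at_within] by auto

lemma in_Dk_vanishes_at_0:
  assumes "in_Dk j h"
  shows "h 0 = 0"
proof -
  have "(h \<longlongrightarrow> h 0) (at 0)" "(h \<longlongrightarrow> 0) (at 0)"
    using assms nilpotent_fun_tendsto_at_0 tendsto_0_if_power_bigo_ident_at_0
    by (auto simp: in_Dk_iff_bigo)
  then show ?thesis
    using tendsto_unique[OF at_neq_bot] by blast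
qed

lemma in_Dk_if_power_bigo_ident:
  assumes "f 0 = 0" "p > 0" "(\<lambda>t. f t ^ p) \<in> O[at 0](\<lambda>t. t)"
  shows "in_Dk p f"
proof -
  have "nilpotent_fun (\<lambda>t. f t ^ p)"
    using assms by (intro nilpotent_fun_if_power_bigo_ident[where k = 1]) simp_all
  then show ?thesis
    using assms by (simp add: in_Dk_iff_bigo nilpotent_fun_if_power_bigo_ident)
qed

lemma fequiv_zero_if_smallo_ident:
  assumes "f 0 = 0" "f \<in> o[at 0](\<lambda>t. t)"
  shows "fequiv f (\<lambda>_. 0)"
proof -
  have "nilpotent_fun f"
    using assms by (intro nilpotent_fun_if_power_bigo_ident[where k = 1]) (simp_all add: landau_o.small_imp_big)
  moreover have "nilpotent_fun (\<lambda>_. 0)"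
    by (intro nilpotent_fun_if_power_bigo_ident[where k = 1]) simp_all
  ultimately show ?thesis
    using assms(2) by (simp add: fequiv_def Nil_set_def)
qed

lemma fequiv_zero_if_power_bigo:
  fixes f :: "real \<Rightarrow> real"
  assumes "f 0 = 0" "0 < L" "L < N" "(\<lambda>t. f t ^ L) \<in> O[at 0](\<lambda>t. t ^ N)"
  shows "fequiv f (\<lambda>_. 0)"
proof -
  have "(\<lambda>t. f t ^ L) \<in> o[at 0](\<lambda>t. t ^ L)"
    using landau_o.big_small_trans[OF assms(4) power_smallo_power_at_0[OF \<open>L < N\<close>]] .
  then have "f \<in> o[at 0](\<lambda>t. t)"
    using \<open>0 < L\<close> by (rule smallo_power_cancel)
  with \<open>f 0 = 0\<close> show ?thesis
    by (rule fequiv_zero_if_smallo_ident)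
qed

lemma in_Dk_if_power_bigo:
  fixes f :: "real \<Rightarrow> real"
  assumes "f 0 = 0" "0 < L" "0 < p" "L \<le> N * p" "(\<lambda>t. f t ^ L) \<in> O[at 0](\<lambda>t. t ^ N)"
  shows "in_Dk p f"
proof -
  have "(\<lambda>t. (f t ^ L) ^ p) \<in> O[at 0](\<lambda>t. (t ^ N) ^ p)"
    using assms(5) by (rule landau_o.big_power)
  also have "(\<lambda>t::real. (t ^ N) ^ p) \<in> O[at 0](\<lambda>t. t ^ L)"
    using power_bigo_power_at_0[OF \<open>L \<le> N * p\<close>] by (simp add: power_mult)
  finally have "(\<lambda>t. (f t ^ L) ^ p) \<in> O[at 0](\<lambda>t. t ^ L)" .
  moreover have "(f t ^ L) ^ p = (f t ^ p) ^ L" for t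
    by (metis power_mult mult.commute)
  ultimately have "(\<lambda>t. (f t ^ p) ^ L) \<in> O[at 0](\<lambda>t. t ^ L)"
    by simp
  then have "(\<lambda>t. f t ^ p) \<in> O[at 0](\<lambda>t. t)"
    using \<open>0 < L\<close> by (rule bigo_power_cancel)
  with assms(1,3) show ?thesis
    by (rule in_Dk_if_power_bigo_ident)
qed

lemma prod_power_in_Dk_vanishes_at_0:
  assumes "\<And>k. k \<in> A \<Longrightarrow> in_Dk (j k) (h k)"
    and "(\<Sum>k\<in>A. real (i k) / real (j k)) \<noteq> 0"
  shows "(\<Prod>k\<in>A. h k 0 ^ i k) = 0"
proof -
  obtain k where "k \<in> A" "i k \<noteq> 0"
    using assms(2) sum.neutral by force
  moreover have "finite A"
    using assms(2) by (meson sum.infinite)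
  ultimately show ?thesis
    using in_Dk_vanishes_at_0[OF assms(1)] by (intro prod_zero) auto
qed

theorem mainTheorem4:
  fixes n :: nat and j i :: "nat \<Rightarrow> nat" and h :: "nat \<Rightarrow> real \<Rightarrow> real"
  assumes "n \<ge> 1"
    and "\<And>k. k \<in> {1..n} \<Longrightarrow> j k \<ge> 1"
    and "\<And>k. k \<in> {1..n} \<Longrightarrow> in_Dk (j k) (h k)"
  shows "((\<Sum>k=1..n. real (i k) / real (j k)) > 1 \<longrightarrow>
           fequiv (\<lambda>t. \<Prod>k=1..n. h k t ^ i k) (\<lambda>t. 0))
       \<and> (\<forall>p::nat. p \<ge> 1 \<and> 1 / real p \<le> (\<Sum>k=1..n. real (i k) / real (j k)) \<and>
           (\<Sum>k=1..n. real (i k) / real (j k)) \<le> 1 \<longrightarrow>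
           in_Dk p (\<lambda>t. \<Prod>k=1..n. h k t ^ i k))"
proof -
  define s where "s = (\<Sum>k=1..n. real (i k) / real (j k))"
  define L where "L = (\<Prod>k=1..n. j k)"
  define N where "N = (\<Sum>k=1..n. i k * (L div j k))"
  define P where "P = (\<lambda>t. \<Prod>k=1..n. h k t ^ i k)"
  have dvd_L: "j k dvd L" if "k \<in> {1..n}" for k
    unfolding L_def using that by (intro dvd_prodI) auto
  have "0 < L"
    unfolding L_def using assms(2) by (simp add: Suc_le_eq)
  have N_eq: "real N = real L * s"
    unfolding N_def s_def using dvd_L by (rule real_sum_mult_div)
  have P_power_L: "(\<lambda>t. P t ^ L) \<in> O[at 0](\<lambda>t. t ^ N)"
    unfolding P_def N_def using assms(3) by (intro prod_power_bigo dvd_L) (simp_all add: in_Dk_iff_bigo)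
  have P_0: "P 0 = 0" if "s > 0"
    unfolding P_def using assms(3) that by (intro prod_power_in_Dk_vanishes_at_0) (auto simp: s_def)
  have "fequiv P (\<lambda>_. 0)" if "s > 1"
  proof (rule fequiv_zero_if_power_bigo[OF P_0 \<open>0 < L\<close> _ P_power_L])
    have "real L < real N"
      using N_eq \<open>0 < L\<close> \<open>s > 1\<close> by simp
    then show "L < N"
      by simp
  qed (use that in simp)
  moreover have "in_Dk p P" if "p \<ge> 1" "1 / real p \<le> s" for p :: nat
  proof (rule in_Dk_if_power_bigo[OF P_0 \<open>0 < L\<close> _ _ P_power_L])
    have "1 \<le> s * real p"
      using that by (simp add: divide_le_eq)
    then have "real L \<le> real N * real p"
      using \<open>0 < L\<close> by (simp add: N_eq mult_le_cancel_left1 mult.assoc)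
    then show "L \<le> N * p"
      by (simp flip: of_nat_mult of_nat_le_iff)
    have "0 < 1 / real p"
      using \<open>p \<ge> 1\<close> by simp
    then show "s > 0"
      using that(2) by linarith
  qed (use that in simp)
  ultimately show ?thesis
    unfolding P_def s_def by blast
qed
end
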